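(* Let $c>0$ be a constant and consider the space of variables $(\rho,v,p,e,dt,dx)$, where $dt,dx$ are treated as independent variables (differentials), with $|v|<c$. Put $S=\dfrac{e+p}{c^{2}-v^{2}}$. For a real parameter $\epsilon$ (for which all expressions below are defined, in particular $\epsilon p+1\neq 0$, $\epsilon(p+Sv^{2})+1\neq 0$, $(\epsilon p+1)^2>v^2/c^2$) define the transformation $T_\epsilon:(\rho,v,p,e,dt,dx)\mapsto(\rho^{*},v^{*},p^{*},e^{*},dt^{*},dx^{*})$ by \[ \rho^{*}=\frac{\rho\sqrt{(\epsilon p+1)^{2}-v^{2}/c^{2}}}{\left(\epsilon(p+Sv^{2})+1\right)\sqrt{1-v^{2}/c^{2}}},\qquad v^{*}=\frac{v}{\epsilon p+1},\qquad p^{*}=\frac{p}{\epsilon p+1}, \] \[ e^{*}=\frac{S\left(c^{2}(\epsilon p+1)^{2}-v^{2}\right)}{\left(\epsilon(p+Sv^{2})+1\right)(\epsilon p+1)}-\frac{p}{\epsilon p+1}, \] \[ dt^{*}=-\epsilon\left(Sv\,dx-(p+Sv^{2})\,dt\right)+dt,\qquad dx^{*}=dx . \] (This is the subclass, with $a_1=-\epsilon^{-1}$, $a_2=a_4=\epsilon^{-1}$, $a_3=1$, of reciprocal transformations leaving invariant the 1+1-dimensional relativistic gasdynamic system $\partial_t\big(\rho c/\sqrt{c^2-v^2}\big)+\partial_x\big(\rho c v/\sqrt{c^2-v^2}\big)=0$, $\partial_t\big((e+p)v/(c^2-v^2)\big)+\partial_x\big((e+p)v^2/(c^2-v^2)+p\big)=0$.)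 Then the family $\{T_\epsilon\}$ is a one-parameter Lie group of transformations ($T_{\epsilon_1}\circ T_{\epsilon_2}=T_{\epsilon_1+\epsilon_2}$ where defined, $T_0=\mathrm{id}$), and, writing $S^{*}=(e^{*}+p^{*})/(c^{2}-v^{*2})$, the transformed quantities satisfy the Cauchy problem \[ \frac{d\rho^{*}}{d\epsilon}=-\frac{\rho^{*}v^{*2}e^{*}}{c^{2}-v^{*2}},\quad \frac{dv^{*}}{d\epsilon}=-p^{*}v^{*},\quad \frac{dp^{*}}{d\epsilon}=-p^{*2},\quad \frac{de^{*}}{d\epsilon}=\frac{c^{2}p^{*2}-v^{*2}e^{*2}}{c^{2}-v^{*2}}, \] \[ \frac{d(dt^{*})}{d\epsilon}=(p^{*}+S^{*}v^{*2})\,dt^{*}-S^{*}v^{*}\,dx^{*},\qquad \frac{d(dx^{*})}{d\epsilon}=0, \] with initial data $\rho^{*}=\rho,\ v^{*}=v,\ p^{*}=p,\ e^{*}=e,\ dt^{*}=dt,\ dx^{*}=dx$ at $\epsilon=0$. Equivalently, the group has infinitesimal generator \[ X=-\frac{\rho v^{2}e}{c^{2}-v^{2}}\partial_{\rho}-pv\,\partial_{v}-p^{2}\partial_{p}+\frac{c^{2}p^{2}-e^{2}v^{2}}{c^{2}-v^{2}}\partial_{e}+\frac{(c^{2}p+ev^{2})\,dt-v(e+p)\,dx}{c^{2}-v^{2}}\,\partial_{dt}. \]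
   Context: $c$ denotes the speed of light; $\rho$ is density, $v$ velocity, $p$ pressure, $e$ energy density. The differentials $dt,dx$ are regarded as additional coordinates on which the transformations act. A one-parameter Lie group of transformations is a family $T_\epsilon$ with $T_0$ the identity and $T_{\epsilon_1}\circ T_{\epsilon_2}=T_{\epsilon_1+\epsilon_2}$; its infinitesimal generator is the vector field of $\epsilon$-derivatives at $\epsilon=0$. *)

theory Defs
  imports "HOL-Analysis.Analysis"
begin

text \<open>States are tuples (rho, v, p, e, dt, dx) of reals; dt and dx are the differentials,
  treated as independent coordinates.\<close>
type_synonym state = "real \<times> real \<times> real \<times> real \<times> real \<times> real"

definition Sfun :: "real \<Rightarrow> real \<Rightarrow> real \<Rightarrow> real \<Rightarrow> real" where
  "Sfun c v p e = (e + p) / (c\<^sup>2 - v\<^sup>2)"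

definition admissible :: "real \<Rightarrow> state \<Rightarrow> bool" where
  "admissible c = (\<lambda>(\<rho>, v, p, e, dt, dx). \<bar>v\<bar> < c)"

definition T_defined :: "real \<Rightarrow> real \<Rightarrow> state \<Rightarrow> bool" where
  "T_defined c \<epsilon> = (\<lambda>(\<rho>, v, p, e, dt, dx).
     \<epsilon> * p + 1 \<noteq> 0 \<and> \<epsilon> * (p + Sfun c v p e * v\<^sup>2) + 1 \<noteq> 0 \<and>
     (\<epsilon> * p + 1)\<^sup>2 > v\<^sup>2 / c\<^sup>2)"

definition T :: "real \<Rightarrow> real \<Rightarrow> state \<Rightarrow> state" where
  "T c \<epsilon> = (\<lambda>(\<rho>, v, p, e, dt, dx).
     let S = Sfun c v p e in
     (\<rho> * sqrt ((\<epsilon> * p + 1)\<^sup>2 - v\<^sup>2 / c\<^sup>2)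
        / ((\<epsilon> * (p + S * v\<^sup>2) + 1) * sqrt (1 - v\<^sup>2 / c\<^sup>2)),
      v / (\<epsilon> * p + 1),
      p / (\<epsilon> * p + 1),
      S * (c\<^sup>2 * (\<epsilon> * p + 1)\<^sup>2 - v\<^sup>2) / ((\<epsilon> * (p + S * v\<^sup>2) + 1) * (\<epsilon> * p + 1))
        - p / (\<epsilon> * p + 1),
      - \<epsilon> * (S * v * dx - (p + S * v\<^sup>2) * dt) + dt,
      dx))"

text \<open>Right-hand side of the Cauchy problem, evaluated at the transformed state
  (rho*, v*, p*, e*, dt*, dx*), with S* = (e*+p*)/(c^2 - v*^2).\<close>
definition ode_rhs :: "real \<Rightarrow> state \<Rightarrow> state" where
  "ode_rhs c = (\<lambda>(\<rho>, v, p, e, dt, dx).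
     let S = (e + p) / (c\<^sup>2 - v\<^sup>2) in
     (- \<rho> * v\<^sup>2 * e / (c\<^sup>2 - v\<^sup>2),
      - p * v,
      - p\<^sup>2,
      (c\<^sup>2 * p\<^sup>2 - v\<^sup>2 * e\<^sup>2) / (c\<^sup>2 - v\<^sup>2),
      (p + S * v\<^sup>2) * dt - S * v * dx,
      0))"

definition generator :: "real \<Rightarrow> state \<Rightarrow> state" where
  "generator c = (\<lambda>(\<rho>, v, p, e, dt, dx).
     (- \<rho> * v\<^sup>2 * e / (c\<^sup>2 - v\<^sup>2),
      - p * v,
      - p\<^sup>2,
      (c\<^sup>2 * p\<^sup>2 - e\<^sup>2 * v\<^sup>2) / (c\<^sup>2 - v\<^sup>2),
      ((c\<^sup>2 * p + e * v\<^sup>2) * dt - v * (e + p) * dx) / (c\<^sup>2 - v\<^sup>2),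
      0))"

end

theory Submission
  imports Defs
begin

(* Put q = p + S v^2, a = eps p + 1 and B = eps q + 1. Then T_eps sends v and p to v/a and p/a and
   S to S a/B, hence q to q/B: both p and q move along the Moebius flow z -> z/(eps z + 1), whose
   parameters add under composition, and the group law reduces to field identities.
   The Cauchy problem needs no computation at general eps: by the group law
   T_eta x = T_(eta - eps) (T_eps x) for eta near eps, so the derivative at eps is the derivative
   at 0 taken at the point T_eps x, i.e. the generator there; on the set |v| < c, which T_eps
   preserves, the generator coincides with the right-hand side of the ODE. *)

lemma has_vector_derivative_of_flow:
  fixes \<Phi> :: "real \<Rightarrow> 'a::real_normed_vector \<Rightarrow> 'a"
  assumes flow: "\<forall>\<^sub>F s in nhds t. \<Phi> s x = \<Phi> (s - t) (\<Phi> t x)"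
    and gen: "((\<lambda>h. \<Phi> h (\<Phi> t x)) has_vector_derivative X) (at 0)"
  shows "((\<lambda>s. \<Phi> s x) has_vector_derivative X) (at t)"
proof -
  have "((\<lambda>h. \<Phi> h (\<Phi> t x)) \<circ> (\<lambda>s. s - t) has_vector_derivative 1 *\<^sub>R X) (at t)"
    by (rule vector_diff_chain_at) (auto intro!: derivative_eq_intros gen)
  then have "((\<lambda>s. \<Phi> (s - t) (\<Phi> t x)) has_vector_derivative X) (at t)"
    by (simp add: o_def)
  moreover have "\<forall>\<^sub>F s in at t. \<Phi> (s - t) (\<Phi> t x) = \<Phi> s x"
    using flow by (auto simp: eventually_at_filter elim: eventually_mono)
  moreover have "\<Phi> (t - t) (\<Phi> t x) = \<Phi> t x"
    using eventually_nhds_x_imp_x[OF flow] by simp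
  ultimately show ?thesis
    unfolding has_vector_derivative_def by (rule has_derivative_transform_eventually) simp_all
qed

lemma admissible_iff:
  assumes "c > 0"
  shows "admissible c (\<rho>, v, p, e, dt, dx) \<longleftrightarrow> v\<^sup>2 < c\<^sup>2"
  using assms abs_le_square_iff[of c v] by (auto simp: admissible_def)

lemma T_apply:
  "T c \<epsilon> (\<rho>, v, p, e, dt, dx) =
    (let S = Sfun c v p e; a = \<epsilon> * p + 1; B = \<epsilon> * (p + S * v\<^sup>2) + 1 in
     (\<rho> * sqrt (a\<^sup>2 - v\<^sup>2 / c\<^sup>2) / (B * sqrt (1 - v\<^sup>2 / c\<^sup>2)),
      v / a, p / a, S * (c\<^sup>2 * a\<^sup>2 - v\<^sup>2) / (B * a) - p / a,
      B * dt - \<epsilon> * S * v * dx, dx))"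
  by (simp add: T_def Let_def algebra_simps)

lemma T_zero:
  assumes "c > 0" and "admissible c x"
  shows "T c 0 x = x"
proof -
  obtain \<rho> v p e dt dx where x: "x = (\<rho>, v, p, e, dt, dx)" by (cases x)
  have "v\<^sup>2 < c\<^sup>2" using assms admissible_iff x by blast
  then have "c\<^sup>2 - v\<^sup>2 \<noteq> 0" "1 - v\<^sup>2 / c\<^sup>2 > 0" using assms(1) by (auto simp: field_simps)
  then show ?thesis by (simp add: x T_apply Sfun_def)
qed

lemma admissible_T:
  assumes "c > 0" and "T_defined c \<epsilon> x"
  shows "admissible c (T c \<epsilon> x)"
proof -
  obtain \<rho> v p e dt dx where x: "x = (\<rho>, v, p, e, dt, dx)" by (cases x)
  have "(\<epsilon> * p + 1)\<^sup>2 > v\<^sup>2 / c\<^sup>2" "\<epsilon> * p + 1 \<noteq> 0" using assms(2) by (auto simp: x T_defined_def)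
  then have "(v / (\<epsilon> * p + 1))\<^sup>2 < c\<^sup>2" using assms(1) by (simp add: field_simps power_divide)
  then show ?thesis using assms(1) by (simp add: x T_apply Let_def admissible_iff)
qed

lemma eventually_T_defined:
  assumes "T_defined c \<epsilon> x"
  shows "\<forall>\<^sub>F \<eta> in nhds \<epsilon>. T_defined c \<eta> x"
proof -
  obtain \<rho> v p e dt dx where x: "x = (\<rho>, v, p, e, dt, dx)" by (cases x)
  define q where "q = p + Sfun c v p e * v\<^sup>2"
  have lim: "((\<lambda>\<eta>. \<eta> * p + 1) \<longlongrightarrow> \<epsilon> * p + 1) (nhds \<epsilon>)"
    "((\<lambda>\<eta>. \<eta> * q + 1) \<longlongrightarrow> \<epsilon> * q + 1) (nhds \<epsilon>)"
    "((\<lambda>\<eta>. (\<eta> * p + 1)\<^sup>2) \<longlongrightarrow> (\<epsilon> * p + 1)\<^sup>2) (nhds \<epsilon>)"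
    by (auto intro!: tendsto_eq_intros filterlim_ident)
  have "\<epsilon> * p + 1 \<noteq> 0" "\<epsilon> * q + 1 \<noteq> 0" "(\<epsilon> * p + 1)\<^sup>2 > v\<^sup>2 / c\<^sup>2"
    using assms by (auto simp: x T_defined_def q_def)
  then show ?thesis
    unfolding x T_defined_def prod.case q_def[symmetric]
    by (intro eventually_conj tendsto_imp_eventually_ne[OF lim(1)] tendsto_imp_eventually_ne[OF lim(2)]
        order_tendstoD(1)[OF lim(3)])
qed

lemma ode_rhs_eq_generator:
  assumes "c > 0" and "admissible c x"
  shows "ode_rhs c x = generator c x"
proof -
  obtain \<rho> v p e dt dx where x: "x = (\<rho>, v, p, e, dt, dx)" by (cases x)
  define W where "W = c\<^sup>2 - v\<^sup>2"
  have "W \<noteq> 0" using assms admissible_iff x W_def by fastforce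
  moreover have "c\<^sup>2 * p + e * v\<^sup>2 = p * W + (e + p) * v\<^sup>2" by (simp add: W_def algebra_simps)
  ultimately show ?thesis
    by (simp add: x ode_rhs_def generator_def W_def[symmetric] field_simps)
qed

lemma Sfun_transformed:
  fixes c \<epsilon> v p e :: real
  defines "S \<equiv> Sfun c v p e"
  defines "a \<equiv> \<epsilon> * p + 1" and "B \<equiv> \<epsilon> * (p + S * v\<^sup>2) + 1"
  assumes "c \<noteq> 0" and "a \<noteq> 0" and "B \<noteq> 0" and "a\<^sup>2 > v\<^sup>2 / c\<^sup>2"
  shows "Sfun c (v / a) (p / a) (S * (c\<^sup>2 * a\<^sup>2 - v\<^sup>2) / (B * a) - p / a) = S * a / B"
proof -
  have "c\<^sup>2 * a\<^sup>2 - v\<^sup>2 \<noteq> 0" using assms(4,7) by (simp add: field_simps)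
  moreover have "c\<^sup>2 - (v / a)\<^sup>2 = (c\<^sup>2 * a\<^sup>2 - v\<^sup>2) / a\<^sup>2" using assms(5) by (simp add: field_simps)
  ultimately show ?thesis using assms(5,6) by (simp add: Sfun_def field_simps power2_eq_square)
qed

lemma T_compose:
  assumes "c \<noteq> 0" and "T_defined c \<epsilon>2 x" and "T_defined c (\<epsilon>1 + \<epsilon>2) x"
  shows "T c \<epsilon>1 (T c \<epsilon>2 x) = T c (\<epsilon>1 + \<epsilon>2) x"
proof -
  obtain \<rho> v p e dt dx where x: "x = (\<rho>, v, p, e, dt, dx)" by (cases x)
  define S where "S = Sfun c v p e"
  define q where "q = p + S * v\<^sup>2"
  define a2 B2 a B where "a2 = \<epsilon>2 * p + 1" and "B2 = \<epsilon>2 * q + 1"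
    and "a = (\<epsilon>1 + \<epsilon>2) * p + 1" and "B = (\<epsilon>1 + \<epsilon>2) * q + 1"
  have nz: "a2 \<noteq> 0" "B2 \<noteq> 0" "a \<noteq> 0" "B \<noteq> 0" and pos: "a2\<^sup>2 > v\<^sup>2 / c\<^sup>2"
    using assms(2,3) by (auto simp: x T_defined_def S_def q_def a2_def B2_def a_def B_def)
  have S': "Sfun c (v / a2) (p / a2) (S * (c\<^sup>2 * a2\<^sup>2 - v\<^sup>2) / (B2 * a2) - p / a2) = S * a2 / B2"
    using Sfun_transformed[of c \<epsilon>2 p v e] assms(1) nz pos
    unfolding S_def[symmetric] q_def[symmetric] a2_def B2_def by simp
  have a': "\<epsilon>1 * (p / a2) + 1 = a / a2" using nz by (simp add: a_def a2_def field_simps)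
  have "p * B2 + S * v\<^sup>2 = a2 * q" by (simp add: B2_def a2_def q_def algebra_simps)
  then have q': "p / a2 + S * a2 / B2 * (v / a2)\<^sup>2 = q / B2"
    using nz by (simp add: field_simps power2_eq_square)
  have B': "\<epsilon>1 * (q / B2) + 1 = B / B2" using nz by (simp add: B_def B2_def field_simps)
  have "(a / a2)\<^sup>2 - (v / a2)\<^sup>2 / c\<^sup>2 = (a\<^sup>2 - v\<^sup>2 / c\<^sup>2) / a2\<^sup>2"
    "1 - (v / a2)\<^sup>2 / c\<^sup>2 = (a2\<^sup>2 - v\<^sup>2 / c\<^sup>2) / a2\<^sup>2"
    using nz by (simp_all add: field_simps)
  then have sqrts: "sqrt ((a / a2)\<^sup>2 - (v / a2)\<^sup>2 / c\<^sup>2) = sqrt (a\<^sup>2 - v\<^sup>2 / c\<^sup>2) / \<bar>a2\<bar>"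
    "sqrt (1 - (v / a2)\<^sup>2 / c\<^sup>2) = sqrt (a2\<^sup>2 - v\<^sup>2 / c\<^sup>2) / \<bar>a2\<bar>"
    by (simp_all add: real_sqrt_divide)
  define K where "K = sqrt (1 - v\<^sup>2 / c\<^sup>2)"
  have "T c \<epsilon>1 (T c \<epsilon>2 x) =
    (\<rho> * sqrt (a2\<^sup>2 - v\<^sup>2 / c\<^sup>2) / (B2 * K) * (sqrt (a\<^sup>2 - v\<^sup>2 / c\<^sup>2) / \<bar>a2\<bar>)
        / (B / B2 * (sqrt (a2\<^sup>2 - v\<^sup>2 / c\<^sup>2) / \<bar>a2\<bar>)),
     v / a2 / (a / a2), p / a2 / (a / a2),
     S * a2 / B2 * (c\<^sup>2 * (a / a2)\<^sup>2 - (v / a2)\<^sup>2) / (B / B2 * (a / a2)) - p / a2 / (a / a2),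
     B / B2 * (B2 * dt - \<epsilon>2 * S * v * dx) - \<epsilon>1 * (S * a2 / B2) * (v / a2) * dx, dx)"
    unfolding x T_apply Let_def S_def[symmetric] q_def[symmetric] a2_def[symmetric] B2_def[symmetric]
      K_def[symmetric] S' a' q' B' sqrts ..
  also have "\<dots> = (\<rho> * sqrt (a\<^sup>2 - v\<^sup>2 / c\<^sup>2) / (B * K), v / a, p / a,
     S * (c\<^sup>2 * a\<^sup>2 - v\<^sup>2) / (B * a) - p / a, B * dt - (\<epsilon>1 + \<epsilon>2) * S * v * dx, dx)"
  proof (simp only: prod.inject, intro conjI)
    have "sqrt (a2\<^sup>2 - v\<^sup>2 / c\<^sup>2) > 0" using pos by simp
    then show "\<rho> * sqrt (a2\<^sup>2 - v\<^sup>2 / c\<^sup>2) / (B2 * K) * (sqrt (a\<^sup>2 - v\<^sup>2 / c\<^sup>2) / \<bar>a2\<bar>)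
        / (B / B2 * (sqrt (a2\<^sup>2 - v\<^sup>2 / c\<^sup>2) / \<bar>a2\<bar>)) = \<rho> * sqrt (a\<^sup>2 - v\<^sup>2 / c\<^sup>2) / (B * K)"
      using nz by (simp add: field_simps)
    show "v / a2 / (a / a2) = v / a" "p / a2 / (a / a2) = p / a"
      using nz by simp_all
    show "S * a2 / B2 * (c\<^sup>2 * (a / a2)\<^sup>2 - (v / a2)\<^sup>2) / (B / B2 * (a / a2)) - p / a2 / (a / a2)
        = S * (c\<^sup>2 * a\<^sup>2 - v\<^sup>2) / (B * a) - p / a"
      using nz by (simp add: field_simps power2_eq_square)
    have "\<epsilon>2 * B + \<epsilon>1 = (\<epsilon>1 + \<epsilon>2) * B2" by (simp add: B_def B2_def algebra_simps)
    then show "B / B2 * (B2 * dt - \<epsilon>2 * S * v * dx) - \<epsilon>1 * (S * a2 / B2) * (v / a2) * dx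
        = B * dt - (\<epsilon>1 + \<epsilon>2) * S * v * dx"
      using nz by (simp add: field_simps) algebra
  qed simp
  also have "\<dots> = T c (\<epsilon>1 + \<epsilon>2) x"
    unfolding x T_apply Let_def S_def[symmetric] q_def[symmetric] a_def[symmetric] B_def[symmetric]
      K_def[symmetric] ..
  finally show ?thesis .
qed

lemma T_has_vector_derivative_at_zero:
  assumes "c > 0" and "admissible c x"
  shows "((\<lambda>\<eta>. T c \<eta> x) has_vector_derivative generator c x) (at 0)"
proof -
  obtain \<rho> v p e dt dx where x: "x = (\<rho>, v, p, e, dt, dx)" by (cases x)
  define S where "S = Sfun c v p e"
  define q where "q = p + S * v\<^sup>2"
  define K where "K = sqrt (1 - v\<^sup>2 / c\<^sup>2)"
  have W: "c\<^sup>2 - v\<^sup>2 > 0" using assms admissible_iff x by fastforce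
  then have pos: "1 - v\<^sup>2 / c\<^sup>2 > 0" using assms(1) by (simp add: field_simps)
  then have K: "K > 0" "K\<^sup>2 = (c\<^sup>2 - v\<^sup>2) / c\<^sup>2" using assms(1) by (auto simp: K_def field_simps)
  have e: "e = S * (c\<^sup>2 - v\<^sup>2) - p" using W by (simp add: S_def Sfun_def)
  have "((\<lambda>\<eta>. \<rho> * sqrt ((\<eta> * p + 1)\<^sup>2 - v\<^sup>2 / c\<^sup>2) / ((\<eta> * q + 1) * K))
      has_real_derivative \<rho> * (p / K\<^sup>2 - q)) (at 0)"
    using pos K(1) W
    by (auto intro!: derivative_eq_intros simp: K_def[symmetric] power2_eq_square[of K] field_simps)
  moreover have "\<rho> * (p / K\<^sup>2 - q) = - \<rho> * v\<^sup>2 * e / (c\<^sup>2 - v\<^sup>2)"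
    using W by (simp add: K(2) q_def e field_simps)
  ultimately have d\<rho>: "((\<lambda>\<eta>. \<rho> * sqrt ((\<eta> * p + 1)\<^sup>2 - v\<^sup>2 / c\<^sup>2) / ((\<eta> * q + 1) * K))
      has_real_derivative - \<rho> * v\<^sup>2 * e / (c\<^sup>2 - v\<^sup>2)) (at 0)"
    by simp
  have dv: "((\<lambda>\<eta>. v / (\<eta> * p + 1)) has_real_derivative - p * v) (at 0)"
    and dp: "((\<lambda>\<eta>. p / (\<eta> * p + 1)) has_real_derivative - p\<^sup>2) (at 0)"
    by (auto intro!: derivative_eq_intros simp: power2_eq_square)
  have "((\<lambda>\<eta>. S * (c\<^sup>2 * (\<eta> * p + 1)\<^sup>2 - v\<^sup>2) / ((\<eta> * q + 1) * (\<eta> * p + 1)) - p / (\<eta> * p + 1))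
      has_real_derivative 2 * c\<^sup>2 * p * S - S * (c\<^sup>2 - v\<^sup>2) * (q + p) + p\<^sup>2) (at 0)"
    by (auto intro!: derivative_eq_intros simp: field_simps power2_eq_square)
  moreover have "2 * c\<^sup>2 * p * S - S * (c\<^sup>2 - v\<^sup>2) * (q + p) + p\<^sup>2 = (c\<^sup>2 * p\<^sup>2 - e\<^sup>2 * v\<^sup>2) / (c\<^sup>2 - v\<^sup>2)"
    using W by (simp add: q_def e field_simps) algebra
  ultimately have de: "((\<lambda>\<eta>. S * (c\<^sup>2 * (\<eta> * p + 1)\<^sup>2 - v\<^sup>2) / ((\<eta> * q + 1) * (\<eta> * p + 1))
      - p / (\<eta> * p + 1)) has_real_derivative (c\<^sup>2 * p\<^sup>2 - e\<^sup>2 * v\<^sup>2) / (c\<^sup>2 - v\<^sup>2)) (at 0)"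
    by simp
  have "((\<lambda>\<eta>. (\<eta> * q + 1) * dt - \<eta> * S * v * dx) has_real_derivative q * dt - S * v * dx) (at 0)"
    by (auto intro!: derivative_eq_intros)
  moreover have "q * dt - S * v * dx = ((c\<^sup>2 * p + e * v\<^sup>2) * dt - v * (e + p) * dx) / (c\<^sup>2 - v\<^sup>2)"
    using W by (simp add: q_def e field_simps)
  ultimately have ddt: "((\<lambda>\<eta>. (\<eta> * q + 1) * dt - \<eta> * S * v * dx) has_real_derivative
      ((c\<^sup>2 * p + e * v\<^sup>2) * dt - v * (e + p) * dx) / (c\<^sup>2 - v\<^sup>2)) (at 0)"
    by simp
  show ?thesis
    unfolding x T_apply Let_def S_def[symmetric] q_def[symmetric] K_def[symmetric] generator_def prod.case
    by (intro has_vector_derivative_Pair has_vector_derivative_const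
        d\<rho>[unfolded has_real_derivative_iff_has_vector_derivative]
        dv[unfolded has_real_derivative_iff_has_vector_derivative]
        dp[unfolded has_real_derivative_iff_has_vector_derivative]
        de[unfolded has_real_derivative_iff_has_vector_derivative]
        ddt[unfolded has_real_derivative_iff_has_vector_derivative])
qed

lemma T_has_vector_derivative:
  assumes "c > 0" and "T_defined c \<epsilon> x"
  shows "((\<lambda>\<eta>. T c \<eta> x) has_vector_derivative ode_rhs c (T c \<epsilon> x)) (at \<epsilon>)"
proof -
  have flow: "\<forall>\<^sub>F \<eta> in nhds \<epsilon>. T c \<eta> x = T c (\<eta> - \<epsilon>) (T c \<epsilon> x)"
    using eventually_T_defined[OF assms(2)]
  proof eventually_elim
    case (elim \<eta>)
    then show ?case using T_compose[of c \<epsilon> x "\<eta> - \<epsilon>"] assms by simp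
  qed
  have adm: "admissible c (T c \<epsilon> x)" using admissible_T assms by blast
  have "((\<lambda>h. T c h (T c \<epsilon> x)) has_vector_derivative generator c (T c \<epsilon> x)) (at 0)"
    by (rule T_has_vector_derivative_at_zero[OF assms(1) adm])
  then have "((\<lambda>\<eta>. T c \<eta> x) has_vector_derivative generator c (T c \<epsilon> x)) (at \<epsilon>)"
    by (rule has_vector_derivative_of_flow[OF flow])
  then show ?thesis by (simp add: ode_rhs_eq_generator[OF assms(1) adm])
qed

theorem mainTheorem1:
  fixes c :: real
  assumes "c > 0"
  shows "(\<forall>x. admissible c x \<longrightarrow> T c 0 x = x)
    \<and> (\<forall>x \<epsilon>1 \<epsilon>2. admissible c x \<and> T_defined c \<epsilon>2 x \<and> T_defined c \<epsilon>1 (T c \<epsilon>2 x)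
          \<and> T_defined c (\<epsilon>1 + \<epsilon>2) x
          \<longrightarrow> T c \<epsilon>1 (T c \<epsilon>2 x) = T c (\<epsilon>1 + \<epsilon>2) x)
    \<and> (\<forall>x \<epsilon>. admissible c x \<and> T_defined c \<epsilon> x
          \<longrightarrow> ((\<lambda>\<eta>. T c \<eta> x) has_vector_derivative ode_rhs c (T c \<epsilon> x)) (at \<epsilon>))
    \<and> (\<forall>x. admissible c x
          \<longrightarrow> ((\<lambda>\<eta>. T c \<eta> x) has_vector_derivative generator c x) (at 0))"
proof (intro conjI allI impI; (elim conjE)?)
  show "T c 0 x = x" if "admissible c x" for x
    using T_zero[OF assms that] .
  show "T c \<epsilon>1 (T c \<epsilon>2 x) = T c (\<epsilon>1 + \<epsilon>2) x"
    if "T_defined c \<epsilon>2 x" and "T_defined c (\<epsilon>1 + \<epsilon>2) x" for x \<epsilon>1 \<epsilon>2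
    using T_compose[of c \<epsilon>2 x \<epsilon>1] assms that by simp
  show "((\<lambda>\<eta>. T c \<eta> x) has_vector_derivative ode_rhs c (T c \<epsilon> x)) (at \<epsilon>)"
    if "T_defined c \<epsilon> x" for x \<epsilon>
    using T_has_vector_derivative[OF assms that] .
  show "((\<lambda>\<eta>. T c \<eta> x) has_vector_derivative generator c x) (at 0)" if "admissible c x" for x
    using T_has_vector_derivative_at_zero[OF assms that] .
qed

end
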